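(* Let $\pi$ be an entanglement swapping protocol for the quantum switch model in the context. Let $L(\mathbf u)=\sum_{i,j\in\mathcal K}u_{ij}^2$ for $\mathbf u\in\mathbb N^{K\times K}$ and $\Delta_T^\pi(\mathbf u,t)=\mathbb E[L(\mathbf U(t+T))-L(\mathbf u)\mid \mathbf U(t)=\mathbf u]$, where $\mathbf U(t)=(U_{ij}(t))_{i,j}$. Suppose there exist a positive integer $T$, an integer $J\in\{0,1,\dots,T-1\}$ and positive constants $C$ and $\{\theta_{ij}\}_{i,j\in\mathcal K}$ such that for all time slots $t\in\{mT+J:m=0,1,2,\dots\}$ and all $\mathbf u$, $$\Delta_T^\pi(\mathbf u,t)\le C-\sum_{i,j\in\mathcal K}\theta_{ij}u_{ij},$$ and suppose $\mathbb E[L(\mathbf U(j))]<\infty$ for $j=0,1,\dots,J$. Then the quantum switch is stable under $\pi$.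
   Context: Quantum switch model. There are $K$ end nodes $\mathcal K=\{1,\dots,K\}$ and a switch (node $0$); time is slotted, $t=0,1,2,\dots$; pair-indexed quantities are symmetric in $(i,j)$. In slot $t$: (i) $C_{0i}(t)\in\{0,1\}$ EPR pairs are generated between the switch and node $i$, where $\{C_{0i}(t)\}_{t\ge0}$ are mutually independent Bernoulli processes (i.i.d. in $t$) with mean $p_i$. (ii) The switch chooses nonnegative integers $F_{ij}(t)=F_{ji}(t)$ (entanglement swaps for pair $(i,j)$, each consuming one stored switch–$i$ and one stored switch–$j$ pair) with $\sum_iF_{ij}(t)\le E_{0j}(t)$ and $\sum_{i,j}F_{ij}(t)\le W$; each swap succeeds independently with probability $q$; $R_{ij}(t)$ is the number of successes. (iii) $A_{ij}(t)\in\mathbb N$ new requests for pair $(i,j)$ arrive. Dynamics: $U_{ij}(t+1)=[U_{ij}(t)-E_{ij}(t)-R_{ij}(t)]^++A_{ij}(t)$, $E_{ij}(t+1)=[E_{ij}(t)+R_{ij}(t)-U_{ij}(t)]^+$, $E_{0i}(t+1)=E_{0i}(t)-\sum_jF_{ij}(t)+C_{0i}(t)$, with zero initial values; $U_{ij}$ = pending requests, $E_{ij}$ = stored $i$–$j$ pairs, $E_{0i}$ = stored switch–$i$ pairs; memory unlimited, no decoherence. Requests: $\{A_{ij}(t)\}_t$ mutually independent across pairs, each stationary ergodic with rate $\lambda_{ij}$, and $\mathbb E[A_{ij}(t)^2\mid H(t)=h]\le A_{\max}^2$ for every $t,i,j$ and realization $h$ of the history $H(t)=(E_{ij}(\tau),U_{ij}(\tau),A_{ij}(\tau),R_{ij}(\tau),C_{0i}(\tau))_{\tau=0}^{t-1}$.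 A protocol is a causal (possibly randomized) rule choosing the $F_{ij}(t)$. The switch is stable if for all $i,j$, $g_{ij}(V)=\limsup_{t\to\infty}\frac1t\sum_{\tau=0}^{t-1}\mathbb P[U_{ij}(\tau)>V]\to0$ as $V\to\infty$. *)

theory Defs
  imports "HOL-Probability.Probability"
begin

text \<open>End nodes are the elements of a finite linearly ordered
type 'k (so K = CARD('k)); the switch is node 0 and quantities E_{0i} are
represented by the separate process E0. Arguments: time t, then node indices, then omega.\<close>

type_synonym seqspace = "(nat \<Rightarrow> nat) measure"

definition seqS :: seqspace where
  "seqS = Pi\<^sub>M UNIV (\<lambda>_. count_space (UNIV :: nat set))"

definition hist_event ::
  "'a measure \<Rightarrow> (nat \<Rightarrow> 'k \<Rightarrow> 'a \<Rightarrow> nat) \<Rightarrow> (nat \<Rightarrow> 'k \<Rightarrow> 'k \<Rightarrow> 'a \<Rightarrow> nat) \<Rightarrow>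
   (nat \<Rightarrow> 'k \<Rightarrow> 'k \<Rightarrow> 'a \<Rightarrow> nat) \<Rightarrow> (nat \<Rightarrow> 'k \<Rightarrow> 'k \<Rightarrow> 'a \<Rightarrow> nat) \<Rightarrow>
   (nat \<Rightarrow> 'k \<Rightarrow> 'k \<Rightarrow> 'a \<Rightarrow> nat) \<Rightarrow> nat \<Rightarrow> 'a \<Rightarrow> 'a set" where
  "hist_event M C R A U E t \<omega>0 =
     {\<omega> \<in> space M. \<forall>\<tau><t.
        (\<forall>i j. E \<tau> i j \<omega> = E \<tau> i j \<omega>0 \<and> U \<tau> i j \<omega> = U \<tau> i j \<omega>0 \<and>
               A \<tau> i j \<omega> = A \<tau> i j \<omega>0 \<and> R \<tau> i j \<omega> = R \<tau> i j \<omega>0) \<and>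
        (\<forall>i. C \<tau> i \<omega> = C \<tau> i \<omega>0)}"

definition stationary_ergodic :: "'a measure \<Rightarrow> (nat \<Rightarrow> 'a \<Rightarrow> nat) \<Rightarrow> real \<Rightarrow> bool" where
  "stationary_ergodic M X r \<longleftrightarrow>
     (\<forall>s. distr M seqS (\<lambda>\<omega> n. X (n + s) \<omega>) = distr M seqS (\<lambda>\<omega> n. X n \<omega>)) \<and>
     (\<forall>B \<in> sets seqS. (\<lambda>x n. x (Suc n)) -` B \<inter> space seqS = B \<longrightarrow>
          measure M {\<omega> \<in> space M. (\<lambda>n. X n \<omega>) \<in> B} \<in> {0, 1}) \<and>
     r = prob_space.expectation M (\<lambda>\<omega>. real (X 0 \<omega>))"

text \<open>All standing assumptions of the quantum switch model (for a run of some protocol):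
C = C_{0i}, F, R, A, U, E pair-indexed, E0 = E_{0i}; parameters p, W, Amax, lam.\<close>
definition quantum_switch ::
  "'a measure \<Rightarrow> ('k::{finite,linorder} \<Rightarrow> real) \<Rightarrow> nat \<Rightarrow> real \<Rightarrow> ('k \<Rightarrow> 'k \<Rightarrow> real) \<Rightarrow>
   (nat \<Rightarrow> 'k \<Rightarrow> 'a \<Rightarrow> nat) \<Rightarrow> (nat \<Rightarrow> 'k \<Rightarrow> 'k \<Rightarrow> 'a \<Rightarrow> nat) \<Rightarrow>
   (nat \<Rightarrow> 'k \<Rightarrow> 'k \<Rightarrow> 'a \<Rightarrow> nat) \<Rightarrow> (nat \<Rightarrow> 'k \<Rightarrow> 'k \<Rightarrow> 'a \<Rightarrow> nat) \<Rightarrow>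
   (nat \<Rightarrow> 'k \<Rightarrow> 'k \<Rightarrow> 'a \<Rightarrow> nat) \<Rightarrow> (nat \<Rightarrow> 'k \<Rightarrow> 'k \<Rightarrow> 'a \<Rightarrow> nat) \<Rightarrow>
   (nat \<Rightarrow> 'k \<Rightarrow> 'a \<Rightarrow> nat) \<Rightarrow> bool" where
  "quantum_switch M p W Amax lam C F R A U E E0 \<longleftrightarrow>
     prob_space M \<and>
     \<comment> \<open>all quantities are random variables\<close>
     (\<forall>t i. C t i \<in> measurable M (count_space UNIV) \<and> E0 t i \<in> measurable M (count_space UNIV)) \<and>
     (\<forall>t i j. F t i j \<in> measurable M (count_space UNIV) \<and> R t i j \<in> measurable M (count_space UNIV) \<and>
              A t i j \<in> measurable M (count_space UNIV) \<and> U t i j \<in> measurable M (count_space UNIV) \<and>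
              E t i j \<in> measurable M (count_space UNIV)) \<and>
     \<comment> \<open>symmetry of pair-indexed quantities\<close>
     (\<forall>t i j \<omega>. F t i j \<omega> = F t j i \<omega> \<and> R t i j \<omega> = R t j i \<omega> \<and> A t i j \<omega> = A t j i \<omega> \<and>
                U t i j \<omega> = U t j i \<omega> \<and> E t i j \<omega> = E t j i \<omega>) \<and>
     \<comment> \<open>EPR generation: independent Bernoulli, i.i.d. in t, mean p i\<close>
     (\<forall>t i \<omega>. C t i \<omega> \<in> {0, 1}) \<and>
     prob_space.indep_vars M (\<lambda>_. count_space UNIV) (\<lambda>(t, i). C t i) UNIV \<and>
     (\<forall>t i. measure M {\<omega> \<in> space M. C t i \<omega> = 1} = p i) \<and>
     \<comment> \<open>swap constraints and successes\<close>
     (\<forall>t j \<omega>. (\<Sum>i\<in>UNIV. F t i j \<omega>) \<le> E0 t j \<omega>) \<and>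
     (\<forall>t \<omega>. (\<Sum>i\<in>UNIV. \<Sum>j\<in>UNIV. F t i j \<omega>) \<le> W) \<and>
     (\<forall>t i j \<omega>. R t i j \<omega> \<le> F t i j \<omega>) \<and>
     \<comment> \<open>dynamics (nat subtraction is the positive part) and zero initial values\<close>
     (\<forall>i j \<omega>. U 0 i j \<omega> = 0 \<and> E 0 i j \<omega> = 0) \<and> (\<forall>i \<omega>. E0 0 i \<omega> = 0) \<and>
     (\<forall>t i j \<omega>. U (Suc t) i j \<omega> = (U t i j \<omega> - E t i j \<omega> - R t i j \<omega>) + A t i j \<omega>) \<and>
     (\<forall>t i j \<omega>. E (Suc t) i j \<omega> = (E t i j \<omega> + R t i j \<omega>) - U t i j \<omega>) \<and>
     (\<forall>t i \<omega>. E0 (Suc t) i \<omega> = E0 t i \<omega> - (\<Sum>j\<in>UNIV. F t i j \<omega>) + C t i \<omega>) \<and>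
     \<comment> \<open>requests: independent across (unordered) pairs, stationary ergodic with rate lam\<close>
     prob_space.indep_vars M (\<lambda>_. seqS) (\<lambda>(i, j) \<omega> n. A n i j \<omega>) {(i, j). i \<le> j} \<and>
     (\<forall>i j. stationary_ergodic M (\<lambda>n. A n i j) (lam i j)) \<and>
     \<comment> \<open>conditional second moment bound given the history H(t)\<close>
     (\<forall>t i j \<omega>0. \<omega>0 \<in> space M \<longrightarrow>
        (\<integral>\<^sup>+ \<omega>. ennreal (real (A t i j \<omega>) ^ 2) * indicator (hist_event M C R A U E t \<omega>0) \<omega> \<partial>M)
          \<le> ennreal (Amax ^ 2) * emeasure M (hist_event M C R A U E t \<omega>0))"

definition lyap :: "('k::finite \<Rightarrow> 'k \<Rightarrow> nat) \<Rightarrow> real" where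
  "lyap u = (\<Sum>i\<in>UNIV. \<Sum>j\<in>UNIV. real (u i j) ^ 2)"

definition switch_stable :: "'a measure \<Rightarrow> (nat \<Rightarrow> 'k \<Rightarrow> 'k \<Rightarrow> 'a \<Rightarrow> nat) \<Rightarrow> bool" where
  "switch_stable M U \<longleftrightarrow>
     (\<forall>i j. ((\<lambda>V::real. limsup (\<lambda>t::nat. ereal ((1 / real t) *
          (\<Sum>\<tau><t. measure M {\<omega> \<in> space M. real (U \<tau> i j \<omega>) > V}))))
        \<longlongrightarrow> 0) at_top)"

end

theory Submission
  imports Defs
begin

(* Summing the conditional drift inequality over the countably many values of U(mT+J) gives
   E L(U((m+1)T+J)) + E[sum theta_ij U_ij(mT+J)] <= E L(U(mT+J)) + C, so by telescoping and
   E L(U(J)) < infinity the sampled means sum_{m<n} E U_ij(mT+J) grow at most linearly in n.  Between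
   two sampling times a queue grows in mean by at most E A_ij <= 1 + Amax^2 per slot, hence the
   Cesaro means of E U_ij(tau) are bounded by some B, and Markov's inequality bounds the Cesaro
   means of P[U_ij(tau) > V] by B / V. *)

lemma sum_lessThan_add:
  fixes f :: "nat \<Rightarrow> 'a::comm_monoid_add"
  shows "(\<Sum>\<tau><a + n. f \<tau>) = (\<Sum>\<tau><a. f \<tau>) + (\<Sum>k<n. f (a + k))"
  by (induction n) (simp_all add: add.assoc)

lemma sum_lessThan_blocks:
  fixes f :: "nat \<Rightarrow> 'a::comm_monoid_add"
  shows "(\<Sum>\<tau><J + n * T. f \<tau>) = (\<Sum>\<tau><J. f \<tau>) + (\<Sum>m<n. \<Sum>k<T. f (m * T + J + k))"
proof (induction n)
  case (Suc n)
  have "J + Suc n * T = (J + n * T) + T"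
    by simp
  then show ?case
    using Suc by (simp only: sum_lessThan_add sum.lessThan_Suc) (simp add: ac_simps)
qed simp

lemma telescoping_drift_le:
  fixes x y :: "nat \<Rightarrow> 'a::{ordered_semiring, semiring_1}"
  assumes drift: "\<And>m. x (Suc m) + y m \<le> x m + c"
  shows "x n + (\<Sum>m<n. y m) \<le> x 0 + of_nat n * c"
proof (induction n)
  case (Suc n)
  have "x (Suc n) + (\<Sum>m<Suc n. y m) = (x (Suc n) + y n) + (\<Sum>m<n. y m)"
    by (simp add: ac_simps)
  also have "\<dots> \<le> (x n + (\<Sum>m<n. y m)) + c"
    using add_right_mono[OF drift[of n], of "\<Sum>m<n. y m"] by (simp add: ac_simps)
  also have "\<dots> \<le> x 0 + of_nat (Suc n) * c"
    using add_right_mono[OF Suc] by (simp add: algebra_simps)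
  finally show ?case .
qed simp

lemma sum_le_of_sampled_sum_le:
  fixes e :: "nat \<Rightarrow> ennreal"
  assumes "0 < T"
    and growth: "\<And>s k. e (s + k) \<le> e s + of_nat k * a"
    and sampled: "\<And>n. (\<Sum>m<n. e (m * T + J)) \<le> b + of_nat n * c"
    and "e 0 < \<infinity>" "a < \<infinity>" "b < \<infinity>" "c < \<infinity>"
  shows "\<exists>B<\<infinity>. \<forall>t. (\<Sum>\<tau><t. e \<tau>) \<le> of_nat t * B"
proof -
  define B where "B = of_nat J * (e 0 + of_nat J * a) + of_nat T * (b + c + of_nat T * a)"
  have growth_le: "e (s + k) \<le> e s + of_nat K * a" if "k \<le> K" for s k K
    using growth[of s k] that by (meson add_left_mono mult_right_mono of_nat_mono order.trans zero_le)
  have "(\<Sum>\<tau><t. e \<tau>) \<le> of_nat t * B" for t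
  proof (cases "t = 0")
    case False
    have "t \<le> J + t * T"
      using \<open>0 < T\<close> by (simp add: trans_le_add2)
    then have "(\<Sum>\<tau><t. e \<tau>) \<le> (\<Sum>\<tau><J + t * T. e \<tau>)"
      by (intro sum_mono2) auto
    also have "\<dots> = (\<Sum>\<tau><J. e \<tau>) + (\<Sum>m<t. \<Sum>k<T. e (m * T + J + k))"
      by (rule sum_lessThan_blocks)
    also have "\<dots> \<le> (\<Sum>\<tau><J. e 0 + of_nat J * a) + (\<Sum>m<t. \<Sum>k<T. e (m * T + J) + of_nat T * a)"
      using growth_le[of _ _ 0] growth_le[of _ _ "m * T + J" for m]
      by (intro add_mono sum_mono) auto
    also have "\<dots> = of_nat J * (e 0 + of_nat J * a) + of_nat T * (\<Sum>m<t. e (m * T + J))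
        + of_nat t * (of_nat T * (of_nat T * a))"
      by (simp add: sum.distrib sum_distrib_left algebra_simps)
    also have "\<dots> \<le> of_nat J * (e 0 + of_nat J * a) + of_nat T * (b + of_nat t * c)
        + of_nat t * (of_nat T * (of_nat T * a))"
      by (intro add_mono mult_left_mono sampled) auto
    also have "\<dots> = (of_nat J * (e 0 + of_nat J * a) + of_nat T * b)
        + of_nat t * (of_nat T * c + of_nat T * (of_nat T * a))"
      by (simp add: algebra_simps)
    also have "\<dots> \<le> of_nat t * (of_nat J * (e 0 + of_nat J * a) + of_nat T * b)
        + of_nat t * (of_nat T * c + of_nat T * (of_nat T * a))"
    proof (intro add_right_mono)
      have "(1::ennreal) \<le> of_nat t"
        using False by (simp add: ennreal_of_nat_eq_real_of_nat)
      then show "x \<le> of_nat t * x" for x :: ennreal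
        using mult_right_mono[of 1 "of_nat t" x] by simp
    qed
    also have "\<dots> = of_nat t * B"
      unfolding B_def by (simp add: algebra_simps)
    finally show ?thesis .
  qed simp
  moreover have "B < \<infinity>"
    using assms unfolding B_def by (simp add: ennreal_mult_less_top of_nat_less_top)
  ultimately show ?thesis
    by blast
qed

lemma measurable_matrix_count_space:
  fixes X :: "'k::finite \<Rightarrow> 'k \<Rightarrow> 'a \<Rightarrow> 'b::countable"
  assumes [measurable]: "\<And>i j. X i j \<in> measurable M (count_space UNIV)"
  shows "(\<lambda>\<omega> i j. X i j \<omega>) \<in> measurable M (count_space UNIV)"
proof -
  have "(\<lambda>\<omega> i j. X i j \<omega>) -` {u} \<inter> space M = {\<omega> \<in> space M. \<forall>i j. X i j \<omega> = u i j}" for u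
    by (auto simp: fun_eq_iff)
  moreover have "{\<omega> \<in> space M. \<forall>i j. X i j \<omega> = u i j} \<in> sets M" for u
    by measurable
  ultimately show ?thesis
    by (simp add: measurable_count_space_eq_countable)
qed

lemma nn_integral_sum_level_sets:
  fixes X :: "'a \<Rightarrow> 'b::countable"
  assumes [measurable]: "X \<in> measurable M (count_space UNIV)" "f \<in> borel_measurable M"
  shows "(\<integral>\<^sup>+u. (\<integral>\<^sup>+\<omega>. f \<omega> * indicator {\<omega> \<in> space M. X \<omega> = u} \<omega> \<partial>M) \<partial>count_space UNIV)
      = (\<integral>\<^sup>+\<omega>. f \<omega> \<partial>M)"
proof -
  have "(\<integral>\<^sup>+u. (\<integral>\<^sup>+\<omega>. f \<omega> * indicator {\<omega> \<in> space M. X \<omega> = u} \<omega> \<partial>M) \<partial>count_space UNIV)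
      = (\<integral>\<^sup>+\<omega>. (\<integral>\<^sup>+u. f \<omega> * indicator {X \<omega>} u \<partial>count_space UNIV) \<partial>M)"
    by (subst nn_integral_count_space_nn_integral[symmetric])
       (auto intro!: nn_integral_cong simp: indicator_def)
  also have "\<dots> = (\<integral>\<^sup>+\<omega>. f \<omega> \<partial>M)"
    by (simp add: nn_integral_cmult_indicator)
  finally show ?thesis .
qed

lemma nn_integral_comp_sum_level_sets:
  fixes X :: "'a \<Rightarrow> 'b::countable"
  assumes [measurable]: "X \<in> measurable M (count_space UNIV)"
  shows "(\<integral>\<^sup>+u. g u * emeasure M {\<omega> \<in> space M. X \<omega> = u} \<partial>count_space UNIV)
      = (\<integral>\<^sup>+\<omega>. g (X \<omega>) \<partial>M)"
proof -
  have "g u * emeasure M {\<omega> \<in> space M. X \<omega> = u}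
      = (\<integral>\<^sup>+\<omega>. g (X \<omega>) * indicator {\<omega> \<in> space M. X \<omega> = u} \<omega> \<partial>M)" for u
    by (subst nn_integral_cmult_indicator[symmetric]) (auto intro!: nn_integral_cong simp: indicator_def)
  moreover have "(\<lambda>\<omega>. g (X \<omega>)) \<in> borel_measurable M"
    by measurable
  ultimately show ?thesis
    by (simp add: nn_integral_sum_level_sets)
qed

lemma nn_integral_add_le_of_level_sets:
  fixes X :: "'a \<Rightarrow> 'b::countable"
  assumes [measurable]: "X \<in> measurable M (count_space UNIV)" "f \<in> borel_measurable M"
    and level_le: "\<And>u. emeasure M {\<omega> \<in> space M. X \<omega> = u} \<noteq> 0 \<Longrightarrow>
      (\<integral>\<^sup>+\<omega>. f \<omega> * indicator {\<omega> \<in> space M. X \<omega> = u} \<omega> \<partial>M)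
        + g u * emeasure M {\<omega> \<in> space M. X \<omega> = u}
      \<le> h u * emeasure M {\<omega> \<in> space M. X \<omega> = u}"
  shows "(\<integral>\<^sup>+\<omega>. f \<omega> \<partial>M) + (\<integral>\<^sup>+\<omega>. g (X \<omega>) \<partial>M) \<le> (\<integral>\<^sup>+\<omega>. h (X \<omega>) \<partial>M)"
proof -
  let ?S = "\<lambda>u. {\<omega> \<in> space M. X \<omega> = u}"
  have level_sets: "?S u \<in> sets M" for u
    by measurable
  have "(\<integral>\<^sup>+\<omega>. f \<omega> * indicator (?S u) \<omega> \<partial>M) + g u * emeasure M (?S u)
      \<le> h u * emeasure M (?S u)" for u
  proof (cases "emeasure M (?S u) = 0")
    case True
    then have "(\<integral>\<^sup>+\<omega>. f \<omega> * indicator (?S u) \<omega> \<partial>M) = 0"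
      using level_sets by (intro nn_integral_null_set) (simp add: null_sets_def)
    with True show ?thesis by simp
  qed (rule level_le)
  then have "(\<integral>\<^sup>+u. (\<integral>\<^sup>+\<omega>. f \<omega> * indicator (?S u) \<omega> \<partial>M) \<partial>count_space UNIV)
      + (\<integral>\<^sup>+u. g u * emeasure M (?S u) \<partial>count_space UNIV)
      \<le> (\<integral>\<^sup>+u. h u * emeasure M (?S u) \<partial>count_space UNIV)"
    by (subst nn_integral_add[symmetric]) (auto intro: nn_integral_mono)
  then show ?thesis
    by (simp add: nn_integral_sum_level_sets nn_integral_comp_sum_level_sets)
qed

lemma nn_integral_le_of_increments:
  fixes X Y :: "nat \<Rightarrow> 'a \<Rightarrow> ennreal"
  assumes [measurable]: "\<And>t. X t \<in> borel_measurable M" "\<And>t. Y t \<in> borel_measurable M"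
    and step: "\<And>t \<omega>. \<omega> \<in> space M \<Longrightarrow> X (Suc t) \<omega> \<le> X t \<omega> + Y t \<omega>"
    and increment_le: "\<And>t. (\<integral>\<^sup>+\<omega>. Y t \<omega> \<partial>M) \<le> a"
  shows "(\<integral>\<^sup>+\<omega>. X (s + k) \<omega> \<partial>M) \<le> (\<integral>\<^sup>+\<omega>. X s \<omega> \<partial>M) + of_nat k * a"
proof (induction k)
  case (Suc k)
  have "(\<integral>\<^sup>+\<omega>. X (s + Suc k) \<omega> \<partial>M) \<le> (\<integral>\<^sup>+\<omega>. X (s + k) \<omega> + Y (s + k) \<omega> \<partial>M)"
    using step by (intro nn_integral_mono) simp
  also have "\<dots> = (\<integral>\<^sup>+\<omega>. X (s + k) \<omega> \<partial>M) + (\<integral>\<^sup>+\<omega>. Y (s + k) \<omega> \<partial>M)"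
    by (rule nn_integral_add) auto
  also have "\<dots> \<le> (\<integral>\<^sup>+\<omega>. X s \<omega> \<partial>M) + of_nat (Suc k) * a"
    using add_mono[OF Suc increment_le[of "s + k"]] by (simp add: algebra_simps)
  finally show ?case .
qed simp

lemma nn_integral_Markov_inequality_greater:
  assumes [measurable]: "X \<in> borel_measurable M" and "0 \<le> V"
  shows "ennreal V * emeasure M {\<omega> \<in> space M. V < X \<omega>} \<le> (\<integral>\<^sup>+\<omega>. ennreal (X \<omega>) \<partial>M)"
proof -
  have "ennreal V * emeasure M {\<omega> \<in> space M. V < X \<omega>}
      = (\<integral>\<^sup>+\<omega>. ennreal V * indicator {\<omega> \<in> space M. V < X \<omega>} \<omega> \<partial>M)"
    by (simp add: nn_integral_cmult_indicator)
  also have "\<dots> \<le> (\<integral>\<^sup>+\<omega>. ennreal (X \<omega>) \<partial>M)"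
    by (intro nn_integral_mono) (auto simp: indicator_def intro: ennreal_leI)
  finally show ?thesis .
qed

lemma (in finite_measure) cesaro_tail_measure_tendsto_0:
  fixes X :: "nat \<Rightarrow> 'a \<Rightarrow> real"
  assumes [measurable]: "\<And>\<tau>. X \<tau> \<in> borel_measurable M"
    and mean_le: "\<And>t. (\<Sum>\<tau><t. \<integral>\<^sup>+\<omega>. ennreal (X \<tau> \<omega>) \<partial>M) \<le> of_nat t * B" and "B < \<infinity>"
  shows "((\<lambda>V. limsup (\<lambda>t. ereal (1 / real t *
            (\<Sum>\<tau><t. measure M {\<omega> \<in> space M. V < X \<tau> \<omega>})))) \<longlongrightarrow> 0) at_top"
proof (rule tendsto_sandwich[where f = "\<lambda>_. 0" and h = "\<lambda>V. ereal (enn2real B / V)"])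
  let ?P = "\<lambda>V \<tau>. measure M {\<omega> \<in> space M. V < X \<tau> \<omega>}"
  have cesaro_le: "1 / real t * (\<Sum>\<tau><t. ?P V \<tau>) \<le> enn2real B / V" if "0 < V" "1 \<le> t" for V t
  proof -
    have "ennreal (V * (\<Sum>\<tau><t. ?P V \<tau>)) = (\<Sum>\<tau><t. ennreal V * emeasure M {\<omega> \<in> space M. V < X \<tau> \<omega>})"
      using \<open>0 < V\<close> by (simp add: emeasure_eq_measure sum_distrib_left ennreal_mult'[symmetric])
    also have "\<dots> \<le> (\<Sum>\<tau><t. \<integral>\<^sup>+\<omega>. ennreal (X \<tau> \<omega>) \<partial>M)"
      using \<open>0 < V\<close> by (intro sum_mono nn_integral_Markov_inequality_greater) auto
    also have "\<dots> \<le> ennreal (real t * enn2real B)"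
      using mean_le[of t] \<open>B < \<infinity>\<close> by (simp add: ennreal_mult ennreal_of_nat_eq_real_of_nat)
    finally have "V * (\<Sum>\<tau><t. ?P V \<tau>) \<le> real t * enn2real B"
      by (simp add: ennreal_le_iff)
    with that show ?thesis
      by (simp add: field_simps)
  qed
  show "\<forall>\<^sub>F V in at_top. 0 \<le> limsup (\<lambda>t. ereal (1 / real t * (\<Sum>\<tau><t. ?P V \<tau>)))"
    by (intro always_eventually allI order.trans[OF _ Liminf_le_Limsup] Liminf_bounded)
       (simp_all add: sum_nonneg)
  show "\<forall>\<^sub>F V in at_top. limsup (\<lambda>t. ereal (1 / real t * (\<Sum>\<tau><t. ?P V \<tau>))) \<le> ereal (enn2real B / V)"
    using eventually_gt_at_top[of 0]
    by eventually_elim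
       (intro Limsup_bounded eventually_sequentially[THEN iffD2] exI[of _ 1] allI impI,
        unfold ereal_less_eq, blast intro: cesaro_le)
  have "((\<lambda>V. enn2real B * inverse V) \<longlongrightarrow> enn2real B * 0) at_top"
    by (intro tendsto_mult tendsto_const tendsto_inverse_0_at_top filterlim_ident)
  then show "((\<lambda>V. ereal (enn2real B / V)) \<longlongrightarrow> 0) at_top"
    by (simp add: divide_inverse zero_ereal_def)
qed simp

lemma stationary_ergodic_nn_integral_shift:
  fixes X :: "nat \<Rightarrow> 'a \<Rightarrow> nat" and f :: "nat \<Rightarrow> ennreal"
  assumes "stationary_ergodic M X r" and [measurable]: "\<And>t. X t \<in> measurable M (count_space UNIV)"
  shows "(\<integral>\<^sup>+\<omega>. f (X t \<omega>) \<partial>M) = (\<integral>\<^sup>+\<omega>. f (X 0 \<omega>) \<partial>M)"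
proof -
  have shift_measurable: "(\<lambda>\<omega> n. X (n + s) \<omega>) \<in> measurable M seqS" for s
  proof -
    have "(\<lambda>\<omega>. \<lambda>n\<in>UNIV. X (n + s) \<omega>) \<in> measurable M seqS"
      unfolding seqS_def by (rule measurable_restrict) simp
    then show ?thesis
      by (simp add: restrict_UNIV)
  qed
  have [measurable]: "(\<lambda>x. f (x 0)) \<in> borel_measurable seqS"
    unfolding seqS_def by measurable
  have "distr M seqS (\<lambda>\<omega> n. X (n + t) \<omega>) = distr M seqS (\<lambda>\<omega> n. X (n + 0) \<omega>)"
    using assms(1) unfolding stationary_ergodic_def by simp
  then have "(\<integral>\<^sup>+x. f (x 0) \<partial>distr M seqS (\<lambda>\<omega> n. X (n + t) \<omega>))
      = (\<integral>\<^sup>+x. f (x 0) \<partial>distr M seqS (\<lambda>\<omega> n. X (n + 0) \<omega>))"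
    by simp
  then show ?thesis
    using shift_measurable[of t] shift_measurable[of 0] by (simp add: nn_integral_distr)
qed

lemma quantum_switch_expected_arrivals_le:
  assumes model: "quantum_switch M p W Amax lam C F R A U E E0"
  shows "(\<integral>\<^sup>+\<omega>. ennreal (real (A t i j \<omega>)) \<partial>M) \<le> ennreal (1 + Amax ^ 2)"
proof -
  interpret prob_space M
    using model by (simp add: quantum_switch_def)
  have [measurable]: "\<And>t. A t i j \<in> measurable M (count_space UNIV)"
    using model by (simp add: quantum_switch_def)
  \<comment> \<open>At time 0 the history is empty, so the conditional moment bound is unconditional;
      stationarity carries the resulting bound on the mean to every time.\<close>
  obtain \<omega>0 where "\<omega>0 \<in> space M"
    using not_empty by blast
  then have "(\<integral>\<^sup>+\<omega>. ennreal (real (A 0 i j \<omega>) ^ 2) * indicator (hist_event M C R A U E 0 \<omega>0) \<omega> \<partial>M)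
      \<le> ennreal (Amax ^ 2) * emeasure M (hist_event M C R A U E 0 \<omega>0)"
    using model unfolding quantum_switch_def by blast
  moreover have "hist_event M C R A U E 0 \<omega>0 = space M"
    by (simp add: hist_event_def)
  ultimately have second_moment: "(\<integral>\<^sup>+\<omega>. ennreal (real (A 0 i j \<omega>) ^ 2) \<partial>M) \<le> ennreal (Amax ^ 2)"
    by (simp add: emeasure_space_1 cong: nn_integral_cong)
  have "(\<integral>\<^sup>+\<omega>. ennreal (real (A t i j \<omega>)) \<partial>M) = (\<integral>\<^sup>+\<omega>. ennreal (real (A 0 i j \<omega>)) \<partial>M)"
    using model by (intro stationary_ergodic_nn_integral_shift) (auto simp: quantum_switch_def)
  also have "\<dots> \<le> (\<integral>\<^sup>+\<omega>. 1 + ennreal (real (A 0 i j \<omega>) ^ 2) \<partial>M)"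
  proof (intro nn_integral_mono)
    have "real n \<le> 1 + (real n) ^ 2" for n :: nat
      using zero_le_power2[of "real n - 1"] by (simp add: power2_diff)
    then show "ennreal (real n) \<le> 1 + ennreal ((real n) ^ 2)" for n :: nat
      by (rule order.trans[OF ennreal_leI]) simp
  qed
  also have "\<dots> = 1 + (\<integral>\<^sup>+\<omega>. ennreal (real (A 0 i j \<omega>) ^ 2) \<partial>M)"
    by (simp add: nn_integral_add emeasure_space_1)
  also have "\<dots> \<le> ennreal (1 + Amax ^ 2)"
    using second_moment by (simp add: add_left_mono)
  finally show ?thesis .
qed

lemma quantum_switch_expected_queue_growth:
  assumes model: "quantum_switch M p W Amax lam C F R A U E E0"
  shows "(\<integral>\<^sup>+\<omega>. ennreal (real (U (s + k) i j \<omega>)) \<partial>M)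
      \<le> (\<integral>\<^sup>+\<omega>. ennreal (real (U s i j \<omega>)) \<partial>M) + of_nat k * ennreal (1 + Amax ^ 2)"
proof (rule nn_integral_le_of_increments)
  have [measurable]: "\<And>t. U t i j \<in> measurable M (count_space UNIV)"
    "\<And>t. A t i j \<in> measurable M (count_space UNIV)"
    using model by (simp_all add: quantum_switch_def)
  show "(\<lambda>\<omega>. ennreal (real (U t i j \<omega>))) \<in> borel_measurable M"
    "(\<lambda>\<omega>. ennreal (real (A t i j \<omega>))) \<in> borel_measurable M" for t
    by measurable
  have queue_step: "U (Suc t) i j \<omega> \<le> U t i j \<omega> + A t i j \<omega>" for t \<omega>
    using model by (simp add: quantum_switch_def)
  show "ennreal (real (U (Suc t) i j \<omega>)) \<le> ennreal (real (U t i j \<omega>)) + ennreal (real (A t i j \<omega>))"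
    for t \<omega>
    using queue_step[of t \<omega>]
    by (simp add: ennreal_plus[symmetric] ennreal_leI del: ennreal_plus flip: of_nat_add)
qed (rule quantum_switch_expected_arrivals_le[OF model])

lemma quantum_switch_expected_drift:
  assumes model: "quantum_switch M p W Amax lam C F R A U E E0" and "0 \<le> Cst"
    and drift: "\<And>u. measure M {\<omega> \<in> space M. (\<lambda>i j. U s i j \<omega>) = u} > 0 \<Longrightarrow>
        (\<integral>\<^sup>+ \<omega>. ennreal (lyap (\<lambda>i j. U (s + T) i j \<omega>)) *
                 indicator {\<omega> \<in> space M. (\<lambda>i j. U s i j \<omega>) = u} \<omega> \<partial>M)
        + ennreal (\<Sum>i\<in>UNIV. \<Sum>j\<in>UNIV. \<theta> i j * real (u i j))
              * emeasure M {\<omega> \<in> space M. (\<lambda>i j. U s i j \<omega>) = u}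
        \<le> ennreal (lyap u + Cst) * emeasure M {\<omega> \<in> space M. (\<lambda>i j. U s i j \<omega>) = u}"
  shows "(\<integral>\<^sup>+\<omega>. ennreal (lyap (\<lambda>i j. U (s + T) i j \<omega>)) \<partial>M)
      + (\<integral>\<^sup>+\<omega>. ennreal (\<Sum>i\<in>UNIV. \<Sum>j\<in>UNIV. \<theta> i j * real (U s i j \<omega>)) \<partial>M)
    \<le> (\<integral>\<^sup>+\<omega>. ennreal (lyap (\<lambda>i j. U s i j \<omega>)) \<partial>M) + ennreal Cst"
proof -
  interpret prob_space M
    using model by (simp add: quantum_switch_def)
  have [measurable]: "\<And>t i j. U t i j \<in> measurable M (count_space UNIV)"
    using model by (simp add: quantum_switch_def)
  have [measurable]: "(\<lambda>\<omega>. lyap (\<lambda>i j. U t i j \<omega>)) \<in> borel_measurable M" for t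
    unfolding lyap_def by measurable
  have measure_pos: "0 < measure M S" if "emeasure M S \<noteq> 0" for S
    using that by (simp add: emeasure_eq_measure zero_less_measure_iff)
  have "(\<integral>\<^sup>+\<omega>. ennreal (lyap (\<lambda>i j. U (s + T) i j \<omega>)) \<partial>M)
      + (\<integral>\<^sup>+\<omega>. ennreal (\<Sum>i\<in>UNIV. \<Sum>j\<in>UNIV. \<theta> i j * real (U s i j \<omega>)) \<partial>M)
    \<le> (\<integral>\<^sup>+\<omega>. ennreal (lyap (\<lambda>i j. U s i j \<omega>) + Cst) \<partial>M)"
  proof (rule nn_integral_add_le_of_level_sets[where X = "\<lambda>\<omega> i j. U s i j \<omega>"
        and g = "\<lambda>u. ennreal (\<Sum>i\<in>UNIV. \<Sum>j\<in>UNIV. \<theta> i j * real (u i j))"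
        and h = "\<lambda>u. ennreal (lyap u + Cst)"])
    show "(\<lambda>\<omega> i j. U s i j \<omega>) \<in> measurable M (count_space UNIV)"
      by (rule measurable_matrix_count_space) simp
  qed (auto intro!: drift measure_pos)
  also have "\<dots> = (\<integral>\<^sup>+\<omega>. ennreal (lyap (\<lambda>i j. U s i j \<omega>)) \<partial>M) + ennreal Cst"
    using \<open>0 \<le> Cst\<close> by (simp add: lyap_def sum_nonneg ennreal_plus nn_integral_add emeasure_space_1)
  finally show ?thesis .
qed

lemma quantum_switch_stable_of_sampled_bound:
  assumes model: "quantum_switch M p W Amax lam C F R A U E E0" and "0 < T"
    and theta_pos: "\<And>i j. 0 < \<theta> i j"
    and sampled: "\<And>n. (\<Sum>m<n. \<integral>\<^sup>+\<omega>. ennreal (\<Sum>i\<in>UNIV. \<Sum>j\<in>UNIV. \<theta> i j * real (U (m * T + J) i j \<omega>)) \<partial>M)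
      \<le> b + of_nat n * c"
    and "b < \<infinity>" "c < \<infinity>"
  shows "switch_stable M U"
  unfolding switch_stable_def
proof (intro allI)
  fix i j
  interpret prob_space M
    using model by (simp add: quantum_switch_def)
  have [measurable]: "\<And>t. U t i j \<in> measurable M (count_space UNIV)"
    using model by (simp add: quantum_switch_def)
  let ?e = "\<lambda>\<tau>. \<integral>\<^sup>+\<omega>. ennreal (real (U \<tau> i j \<omega>)) \<partial>M"
  have entry_le: "ennreal (\<theta> i j) * ?e \<tau>
      \<le> (\<integral>\<^sup>+\<omega>. ennreal (\<Sum>i\<in>UNIV. \<Sum>j\<in>UNIV. \<theta> i j * real (U \<tau> i j \<omega>)) \<partial>M)" for \<tau>
  proof -
    have "\<theta> i j * real (U \<tau> i j \<omega>) \<le> (\<Sum>i\<in>UNIV. \<Sum>j\<in>UNIV. \<theta> i j * real (U \<tau> i j \<omega>))" for \<omega>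
      using theta_pos
      by (intro member_le_sum[of i, THEN order.trans[rotated]] member_le_sum sum_nonneg)
         (auto simp: less_imp_le)
    then show ?thesis
      using theta_pos[of i j]
      by (subst nn_integral_cmult[symmetric])
         (auto intro!: nn_integral_mono ennreal_leI simp flip: ennreal_mult)
  qed
  have sampled_entry: "(\<Sum>m<n. ?e (m * T + J)) \<le> b / \<theta> i j + of_nat n * (c / \<theta> i j)" for n
  proof -
    have "(\<Sum>m<n. ?e (m * T + J)) = (ennreal (\<theta> i j) * (\<Sum>m<n. ?e (m * T + J))) / \<theta> i j"
      using theta_pos[of i j] by (subst mult.commute, subst ennreal_mult_divide_eq) auto
    also have "\<dots> \<le> (b + of_nat n * c) / \<theta> i j"
      by (intro divide_right_mono_ennreal order.trans[OF _ sampled])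
         (simp add: sum_distrib_left sum_mono entry_le)
    also have "\<dots> = b / \<theta> i j + of_nat n * (c / \<theta> i j)"
      by (simp add: add_divide_distrib_ennreal ennreal_times_divide)
    finally show ?thesis .
  qed
  have "\<exists>B<\<infinity>. \<forall>t. (\<Sum>\<tau><t. ?e \<tau>) \<le> of_nat t * B"
  proof (rule sum_le_of_sampled_sum_le[OF \<open>0 < T\<close> _ sampled_entry])
    show "?e (s + k) \<le> ?e s + of_nat k * ennreal (1 + Amax ^ 2)" for s k
      by (rule quantum_switch_expected_queue_growth[OF model])
    show "?e 0 < \<infinity>"
      using model by (simp add: quantum_switch_def)
  qed (use theta_pos[of i j] \<open>b < \<infinity>\<close> \<open>c < \<infinity>\<close> in
         \<open>simp_all add: less_top[symmetric] ennreal_divide_eq_top_iff\<close>)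
  then obtain B where "B < \<infinity>" "\<And>t. (\<Sum>\<tau><t. ?e \<tau>) \<le> of_nat t * B"
    by blast
  then show "((\<lambda>V. limsup (\<lambda>t. ereal (1 / real t *
      (\<Sum>\<tau><t. measure M {\<omega> \<in> space M. real (U \<tau> i j \<omega>) > V})))) \<longlongrightarrow> 0) at_top"
    by (intro cesaro_tail_measure_tendsto_0[of "\<lambda>\<tau> \<omega>. real (U \<tau> i j \<omega>)" B]) auto
qed

theorem lemma1:
  fixes M :: "'a measure"
    and p :: "'k::{finite,linorder} \<Rightarrow> real" and W :: nat and Amax :: real
    and lam :: "'k \<Rightarrow> 'k \<Rightarrow> real"
    and C :: "nat \<Rightarrow> 'k \<Rightarrow> 'a \<Rightarrow> nat" and E0 :: "nat \<Rightarrow> 'k \<Rightarrow> 'a \<Rightarrow> nat"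
    and F R A U E :: "nat \<Rightarrow> 'k \<Rightarrow> 'k \<Rightarrow> 'a \<Rightarrow> nat"
    and T J :: nat and Cst :: real and \<theta> :: "'k \<Rightarrow> 'k \<Rightarrow> real"
  assumes model: "quantum_switch M p W Amax lam C F R A U E E0"
    and T_pos: "T > 0" and J_lt: "J < T"
    and Cst_pos: "Cst > 0" and theta_pos: "\<And>i j. \<theta> i j > 0"
    and drift: "\<And>m u. measure M {\<omega> \<in> space M. (\<lambda>i j. U (m * T + J) i j \<omega>) = u} > 0 \<Longrightarrow>
        (\<integral>\<^sup>+ \<omega>. ennreal (lyap (\<lambda>i j. U (m * T + J + T) i j \<omega>)) *
                 indicator {\<omega> \<in> space M. (\<lambda>i j. U (m * T + J) i j \<omega>) = u} \<omega> \<partial>M)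
        + ennreal (\<Sum>i\<in>UNIV. \<Sum>j\<in>UNIV. \<theta> i j * real (u i j))
              * emeasure M {\<omega> \<in> space M. (\<lambda>i j. U (m * T + J) i j \<omega>) = u}
        \<le> ennreal (lyap u + Cst) * emeasure M {\<omega> \<in> space M. (\<lambda>i j. U (m * T + J) i j \<omega>) = u}"
    and init: "\<And>j. j \<le> J \<Longrightarrow> (\<integral>\<^sup>+ \<omega>. ennreal (lyap (\<lambda>a b. U j a b \<omega>)) \<partial>M) < \<infinity>"
  shows "switch_stable M U"
proof -
  define x where "x m = (\<integral>\<^sup>+\<omega>. ennreal (lyap (\<lambda>i j. U (m * T + J) i j \<omega>)) \<partial>M)" for m
  define y where "y m = (\<integral>\<^sup>+\<omega>. ennreal (\<Sum>i\<in>UNIV. \<Sum>j\<in>UNIV. \<theta> i j * real (U (m * T + J) i j \<omega>)) \<partial>M)"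
    for m
  have "x (Suc m) + y m \<le> x m + ennreal Cst" for m
  proof -
    have "Suc m * T + J = m * T + J + T"
      by simp
    then show ?thesis
      using quantum_switch_expected_drift[OF model less_imp_le[OF Cst_pos] drift, of m]
      by (simp only: x_def y_def)
  qed
  then have "x n + (\<Sum>m<n. y m) \<le> x 0 + of_nat n * ennreal Cst" for n
    by (rule telescoping_drift_le)
  then have "(\<Sum>m<n. y m) \<le> x 0 + of_nat n * ennreal Cst" for n
    by (rule order.trans[rotated]) simp
  \<comment> \<open>Only the case j = J of init is needed, and J < T plays no role.\<close>
  moreover have "x 0 < \<infinity>"
    using init[of J] by (simp add: x_def)
  ultimately show ?thesis
    unfolding y_def
    by (intro quantum_switch_stable_of_sampled_bound[OF model T_pos theta_pos,
          where b = "x 0" and c = "ennreal Cst"]) auto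
qed

end
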